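(* Let $\Delta:\mathbb N\to\mathbb N$ be a function, and let $\eta\in(0,1)$ and $C$ be constants such that for every $n\in\mathbb N$ there exist $\ell,m\in\mathbb N$ with $\ell+m\le\eta n+C$ and $\Delta(n)\le\Delta(\ell)+\Delta(m)$. Set $\alpha=\log(2)/\log(2/\eta)$. Then $\Delta(n)\preceq n^\alpha$.
   Context: For functions $f,g:\mathbb N\to\mathbb R_+$, write $g\preceq f$ if there is $C'>0$ with $g(n)\le f(C'n)$ for all sufficiently large $n$. *)

theory Defs
  imports Complex_Main
begin

text \<open>Growth preorder: g is dominated by f if there is C' > 0 with
  g n \<le> f (C' n) for all sufficiently large n.  The function f is given on
  the reals so that f (C' n) makes sense for real C'.\<close>
definition preceq :: "(nat \<Rightarrow> real) \<Rightarrow> (real \<Rightarrow> real) \<Rightarrow> bool" where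
  "preceq g f \<longleftrightarrow> (\<exists>C'>0. eventually (\<lambda>n. g n \<le> f (C' * real n)) sequentially)"

end

theory Submission
  imports Defs "HOL-Analysis.Convex" "HOL-Real_Asymp.Real_Asymp"
begin

text \<open>With \<alpha> chosen so that (2/\<eta>) powr \<alpha> = 2, concavity of x powr \<alpha> gives
  (l+1) powr \<alpha> + (m+1) powr \<alpha> \<le> 2 ((l+m)/2 + 1) powr \<alpha> \<le> (n + K) powr \<alpha>
  whenever l + m \<le> \<eta> n + C.  Since (n + K) powr \<alpha> - (n + 1) powr \<alpha> tends to 0,
  the bound \<Delta> n \<le> A ((n+1) powr \<alpha> - 1/2) propagates by strong induction from an
  initial segment, the constant -1/2 absorbing the error.\<close>

lemma powr_add_le_twice_midpoint_powr:
  fixes a b \<alpha> :: real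
  assumes "a > 0" "b > 0" "0 \<le> \<alpha>" "\<alpha> \<le> 1"
  shows "a powr \<alpha> + b powr \<alpha> \<le> 2 * ((a + b) / 2) powr \<alpha>"
proof -
  define m where "m = (a + b) / 2"
  have m: "m > 0" using assms by (simp add: m_def)
  have "a powr \<alpha> * m powr (1 - \<alpha>) \<le> \<alpha> * a + (1 - \<alpha>) * m"
       "b powr \<alpha> * m powr (1 - \<alpha>) \<le> \<alpha> * b + (1 - \<alpha>) * m"
    using Youngs_inequality_0[of \<alpha> "1 - \<alpha>" _ m] assms m by simp_all
  then have "(a powr \<alpha> + b powr \<alpha>) * m powr (1 - \<alpha>) \<le> 2 * m"
    unfolding m_def by (simp add: distrib_right) argo
  also have "2 * m = (2 * m powr \<alpha>) * m powr (1 - \<alpha>)"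
    using m by (simp add: powr_add[symmetric])
  finally show ?thesis using m by (simp add: m_def)
qed

lemma halving_exponent:
  fixes \<eta> :: real
  assumes "0 < \<eta>" "\<eta> < 1"
  defines "\<alpha> \<equiv> ln 2 / ln (2 / \<eta>)"
  shows "0 < \<alpha>" "\<alpha> < 1" "(2 / \<eta>) powr \<alpha> = 2"
proof -
  have "ln 2 < ln (2 / \<eta>)" using assms by (simp add: field_simps)
  moreover have "(0::real) < ln 2" by simp
  ultimately have "0 < ln (2 / \<eta>)" by linarith
  with \<open>ln 2 < ln (2 / \<eta>)\<close> \<open>0 < ln 2\<close> show "0 < \<alpha>" "\<alpha> < 1"
    unfolding \<alpha>_def by (simp_all only: divide_pos_pos divide_less_eq_1_pos)
  have "\<alpha> * ln (2 / \<eta>) = ln 2"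
    using \<open>0 < ln (2 / \<eta>)\<close> by (simp add: \<alpha>_def)
  then show "(2 / \<eta>) powr \<alpha> = 2" using assms by (simp add: powr_def)
qed

lemma powr_add_le_powr_rescaled:
  fixes x y n c \<eta> \<alpha> :: real
  assumes "0 < \<eta>" "0 \<le> \<alpha>" "\<alpha> \<le> 1" "(2 / \<eta>) powr \<alpha> = 2"
    and "0 \<le> x" "0 \<le> y" "0 \<le> c" "x + y \<le> \<eta> * n + c"
  shows "(x + 1) powr \<alpha> + (y + 1) powr \<alpha> \<le> (n + (c + 2) / \<eta>) powr \<alpha>"
proof -
  have "(x + 1) powr \<alpha> + (y + 1) powr \<alpha> \<le> 2 * ((x + 1 + (y + 1)) / 2) powr \<alpha>"
    using assms by (intro powr_add_le_twice_midpoint_powr) auto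
  also have "\<dots> \<le> 2 * ((\<eta> * n + c + 2) / 2) powr \<alpha>"
    using assms by (intro mult_left_mono powr_mono2) auto
  also have "\<dots> = (2 / \<eta>) powr \<alpha> * ((\<eta> * n + c + 2) / 2) powr \<alpha>"
    using assms(4) by simp
  also have "\<dots> = (n + (c + 2) / \<eta>) powr \<alpha>"
  proof -
    have "0 \<le> \<eta> * n + c + 2" using assms by linarith
    moreover have "(2 / \<eta>) * ((\<eta> * n + c + 2) / 2) = n + (c + 2) / \<eta>"
      using assms(1) by (simp add: field_simps)
    ultimately show ?thesis using assms(1) by (metis powr_mult)
  qed
  finally show ?thesis .
qed

lemma preceq_powr_if_bounded:
  fixes g :: "nat \<Rightarrow> real" and A \<alpha> :: real
  assumes "A > 0" "\<alpha> > 0" "\<And>n. g n \<le> A * (real n + 1) powr \<alpha>"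
  shows "preceq g (\<lambda>x. x powr \<alpha>)"
proof -
  define C' where "C' = 2 * A powr (1 / \<alpha>)"
  have "g n \<le> (C' * real n) powr \<alpha>" if "n \<ge> 1" for n
  proof -
    have "(real n + 1) powr \<alpha> \<le> (2 * real n) powr \<alpha>"
      using that assms(2) by (intro powr_mono2) auto
    then have "g n \<le> A * (2 * real n) powr \<alpha>"
      using assms(1) assms(3)[of n] by (meson mult_left_mono order_trans less_imp_le)
    also have "\<dots> = (A powr (1 / \<alpha>)) powr \<alpha> * (2 * real n) powr \<alpha>"
      using assms(1,2) by (simp add: powr_powr)
    also have "\<dots> = (C' * real n) powr \<alpha>"
      using assms(1) by (simp add: C'_def powr_mult[symmetric] mult_ac)
    finally show ?thesis .
  qed
  moreover have "C' > 0" using assms(1) by (simp add: C'_def)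
  ultimately show ?thesis unfolding preceq_def eventually_sequentially by blast
qed

lemma eventually_powr_shift_less:
  fixes K \<alpha> \<epsilon> :: real
  assumes "K > 0" "0 < \<alpha>" "\<alpha> < 1" "\<epsilon> > 0"
  shows "eventually (\<lambda>n::nat. (real n + K) powr \<alpha> < (real n + 1) powr \<alpha> + \<epsilon>) sequentially"
proof -
  have "((\<lambda>n::nat. (real n + K) powr \<alpha> - (real n + 1) powr \<alpha>) \<longlongrightarrow> 0) sequentially"
    using assms(1-3) by real_asymp
  from order_tendstoD(2)[OF this assms(4)] show ?thesis by (simp add: algebra_simps)
qed

lemma bounded_by_powr_if_recursively_split:
  fixes \<Delta> :: "nat \<Rightarrow> nat" and \<eta> C \<alpha> :: real
  assumes "0 < \<eta>" "\<eta> < 1" "0 < \<alpha>" "\<alpha> < 1" "(2 / \<eta>) powr \<alpha> = 2"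
    and split: "\<And>n. \<exists>l m. real (l + m) \<le> \<eta> * real n + C \<and> \<Delta> n \<le> \<Delta> l + \<Delta> m"
  obtains A where "A > 0" "\<And>n. real (\<Delta> n) \<le> A * (real n + 1) powr \<alpha>"
proof -
  define c where "c = max C 0"
  have c: "0 \<le> c" "C \<le> c" by (auto simp: c_def)
  define K where "K = (c + 2) / \<eta>"
  have "K > 0" using assms(1) c by (simp add: K_def)
  have "eventually (\<lambda>n. (real n + K) powr \<alpha> < (real n + 1) powr \<alpha> + 1/2) sequentially"
    using \<open>K > 0\<close> assms(3,4) by (intro eventually_powr_shift_less) auto
  moreover have "eventually (\<lambda>n::nat. real n > c / (1 - \<eta>)) sequentially"
    by real_asymp
  ultimately have "eventually (\<lambda>n.
      (real n + K) powr \<alpha> < (real n + 1) powr \<alpha> + 1/2 \<and> real n > c / (1 - \<eta>)) sequentially"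
    by (rule eventually_conj)
  then obtain N where N: "\<And>n. n \<ge> N \<Longrightarrow>
      (real n + K) powr \<alpha> < (real n + 1) powr \<alpha> + 1/2 \<and> real n > c / (1 - \<eta>)"
    unfolding eventually_sequentially by blast
  define A :: real where "A = 2 * real (Max (\<Delta> ` {..N})) + 2"
  have A: "A > 0" by (simp add: A_def)
  have bound: "real (\<Delta> n) \<le> A * ((real n + 1) powr \<alpha> - 1/2)" for n
  proof (induction n rule: less_induct)
    case (less n)
    have one_le: "1 \<le> (real k + 1) powr \<alpha>" for k
      using assms(3) by (intro ge_one_powr_ge_zero) auto
    show ?case
    proof (cases "n \<le> N")
      case True
      then have "\<Delta> n \<le> Max (\<Delta> ` {..N})" by (intro Max_ge) auto
      then have "real (\<Delta> n) \<le> A * (1/2)" by (simp add: A_def)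
      also have "\<dots> \<le> A * ((real n + 1) powr \<alpha> - 1/2)"
        using A one_le[of n] by (intro mult_left_mono) auto
      finally show ?thesis .
    next
      case False
      obtain l m where lm: "real (l + m) \<le> \<eta> * real n + C" "\<Delta> n \<le> \<Delta> l + \<Delta> m"
        using split by blast
      have "c < real n * (1 - \<eta>)"
        using N[of n] False assms(2) by (simp add: field_simps)
      then have "l < n" "m < n" using lm(1) c by (simp_all add: algebra_simps)
      moreover have "real (\<Delta> n) \<le> real (\<Delta> l) + real (\<Delta> m)"
        using lm(2) by (metis of_nat_add of_nat_mono)
      ultimately have "real (\<Delta> n) \<le>
          A * ((real l + 1) powr \<alpha> - 1/2) + A * ((real m + 1) powr \<alpha> - 1/2)"
        using less.IH[of l] less.IH[of m] by linarith
      also have "\<dots> = A * ((real l + 1) powr \<alpha> + (real m + 1) powr \<alpha> - 1)"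
        by (simp add: algebra_simps)
      also have "\<dots> \<le> A * ((real n + K) powr \<alpha> - 1)"
        using powr_add_le_powr_rescaled[of \<eta> \<alpha> "real l" "real m" c "real n"] assms lm(1) c A
        by (intro mult_left_mono) (auto simp: K_def)
      also have "\<dots> \<le> A * ((real n + 1) powr \<alpha> - 1/2)"
        using N[of n] False A by (intro mult_left_mono) auto
      finally show ?thesis .
    qed
  qed
  show ?thesis
  proof (rule that[OF A])
    show "real (\<Delta> n) \<le> A * (real n + 1) powr \<alpha>" for n
      using bound[of n] A by (simp add: algebra_simps)
  qed
qed

theorem lemma4p3:
  fixes \<Delta> :: "nat \<Rightarrow> nat" and \<eta> C :: real
  assumes "0 < \<eta>" and "\<eta> < 1"
    and "\<And>n. \<exists>l m. real (l + m) \<le> \<eta> * real n + C \<and> \<Delta> n \<le> \<Delta> l + \<Delta> m"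
  shows "preceq (\<lambda>n. real (\<Delta> n)) (\<lambda>x. x powr (ln 2 / ln (2 / \<eta>)))"
proof -
  note exponent = halving_exponent[OF assms(1,2)]
  obtain A where "A > 0" "\<And>n. real (\<Delta> n) \<le> A * (real n + 1) powr (ln 2 / ln (2 / \<eta>))"
    using bounded_by_powr_if_recursively_split[OF assms(1,2) exponent assms(3)] by blast
  with exponent(1) show ?thesis by (intro preceq_powr_if_bounded[of A])
qed

end
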